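(* Let $\eta\in D$ with $|\eta|=|i|$ and let $a_1\in\mathcal{O}_D^*$ be a pure quaternion. Then $T\big(2(\eta a_1\bar\eta)^{-1}a_1\big)\in\pi\mathcal{O}_k$.
   Context: $k$ is a dyadic local field of characteristic $0$ with ring of integers $\mathcal{O}_k$ and uniformizer $\pi$; $\Delta\in\mathcal{O}_k^*$ is a unit of minimal quadratic defect. $D=\left(\frac{\pi,\Delta}{k}\right)$ is the quaternion division algebra with basis $1,i,j,ij$, $i^2=\pi$, $j^2=\Delta$, $ij=-ji$; $q\mapsto\bar q$ is the canonical involution, $N$ the reduced norm, $T$ the reduced trace, $|q|:=|N(q)|_k$, and $\mathcal{O}_D=\{q:|q|\le1\}$. A pure quaternion is $q$ with $\bar q=-q$. *)

theory Defs
  imports Complex_Main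
begin

text \<open>A (non-archimedean, discretely valued, complete) absolute value on a field of
characteristic 0 whose residue field is finite and in which 2 is not a unit:
i.e. a dyadic local field of characteristic 0 (a finite extension of Q_2).\<close>

definition dyadic_local_field :: "('k::field_char_0 \<Rightarrow> real) \<Rightarrow> bool" where
  "dyadic_local_field absk \<longleftrightarrow>
     (\<forall>x. absk x \<ge> 0) \<and> (\<forall>x. absk x = 0 \<longleftrightarrow> x = 0) \<and>
     (\<forall>x y. absk (x * y) = absk x * absk y) \<and>
     (\<forall>x y. absk (x + y) \<le> max (absk x) (absk y)) \<and>
     \<comment> \<open>discrete and nontrivial: the maximal ideal is principal, generated by some p\<close>
     (\<exists>p. 0 < absk p \<and> absk p < 1 \<and> (\<forall>x. absk x < 1 \<longrightarrow> absk x \<le> absk p)) \<and>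
     \<comment> \<open>complete\<close>
     (\<forall>X :: nat \<Rightarrow> 'k.
        (\<forall>e>0. \<exists>N. \<forall>m\<ge>N. \<forall>n\<ge>N. absk (X m - X n) < e) \<longrightarrow>
        (\<exists>L. \<forall>e>0. \<exists>N. \<forall>n\<ge>N. absk (X n - L) < e)) \<and>
     \<comment> \<open>finite residue field\<close>
     (\<exists>R. finite R \<and> (\<forall>x. absk x \<le> 1 \<longrightarrow> (\<exists>r\<in>R. absk (x - r) < 1))) \<and>
     \<comment> \<open>dyadic: residue characteristic 2\<close>
     absk 2 < 1"

definition Ok :: "('k::field_char_0 \<Rightarrow> real) \<Rightarrow> 'k set" where
  "Ok absk = {x. absk x \<le> 1}"

definition Ok_units :: "('k::field_char_0 \<Rightarrow> real) \<Rightarrow> 'k set" where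
  "Ok_units absk = {x \<in> Ok absk. \<exists>y \<in> Ok absk. x * y = 1}"

definition uniformizer :: "('k::field_char_0 \<Rightarrow> real) \<Rightarrow> 'k \<Rightarrow> bool" where
  "uniformizer absk p \<longleftrightarrow> 0 < absk p \<and> absk p < 1 \<and> (\<forall>x. absk x < 1 \<longrightarrow> absk x \<le> absk p)"

text \<open>Quadratic defect (O'Meara 63A): the intersection of the fractional ideals
  (\<Delta> - x^2) O_k over all x in k.\<close>
definition quad_defect :: "('k::field_char_0 \<Rightarrow> real) \<Rightarrow> 'k \<Rightarrow> 'k set" where
  "quad_defect absk d = (\<Inter>x. {(d - x^2) * y | y. y \<in> Ok absk})"

definition unit_min_quad_defect :: "('k::field_char_0 \<Rightarrow> real) \<Rightarrow> 'k \<Rightarrow> bool" where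
  "unit_min_quad_defect absk d \<longleftrightarrow>
     d \<in> Ok_units absk \<and> quad_defect absk d = {4 * y | y. y \<in> Ok absk}"

text \<open>\<open>Q a b c d\<close> stands for a + b i + c j + d ij.\<close>
datatype 'k quat = Q (re: 'k) (ci: 'k) (cj: 'k) (cij: 'k)

definition qone :: "'k::field quat" where "qone = Q 1 0 0 0"
definition qi :: "'k::field quat" where "qi = Q 0 1 0 0"

definition qscale :: "'k::field \<Rightarrow> 'k quat \<Rightarrow> 'k quat" where
  "qscale s q = Q (s * re q) (s * ci q) (s * cj q) (s * cij q)"

text \<open>Multiplication with i^2 = p, j^2 = dl, ij = -ji.\<close>
definition qmul :: "'k::field \<Rightarrow> 'k \<Rightarrow> 'k quat \<Rightarrow> 'k quat \<Rightarrow> 'k quat" where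
  "qmul p dl x y =
     Q (re x * re y + p * ci x * ci y + dl * cj x * cj y - p * dl * cij x * cij y)
       (re x * ci y + ci x * re y - dl * cj x * cij y + dl * cij x * cj y)
       (re x * cj y + cj x * re y + p * ci x * cij y - p * cij x * ci y)
       (re x * cij y + cij x * re y + ci x * cj y - cj x * ci y)"

definition qconj :: "'k::field quat \<Rightarrow> 'k quat" where
  "qconj q = Q (re q) (- ci q) (- cj q) (- cij q)"

definition qnorm :: "'k::field \<Rightarrow> 'k \<Rightarrow> 'k quat \<Rightarrow> 'k" where
  "qnorm p dl q = re q ^ 2 - p * ci q ^ 2 - dl * cj q ^ 2 + p * dl * cij q ^ 2"

definition qtrace :: "'k::field quat \<Rightarrow> 'k" where
  "qtrace q = 2 * re q"

text \<open>Inverse q^{-1} = conj q / N(q) (junk value 0 for q = 0).\<close>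
definition qinv :: "'k::field \<Rightarrow> 'k \<Rightarrow> 'k quat \<Rightarrow> 'k quat" where
  "qinv p dl q = qscale (inverse (qnorm p dl q)) (qconj q)"

definition qabs :: "('k::field_char_0 \<Rightarrow> real) \<Rightarrow> 'k \<Rightarrow> 'k \<Rightarrow> 'k quat \<Rightarrow> real" where
  "qabs absk p dl q = absk (qnorm p dl q)"

definition OD :: "('k::field_char_0 \<Rightarrow> real) \<Rightarrow> 'k \<Rightarrow> 'k \<Rightarrow> 'k quat set" where
  "OD absk p dl = {q. qabs absk p dl q \<le> 1}"

definition OD_units :: "('k::field_char_0 \<Rightarrow> real) \<Rightarrow> 'k \<Rightarrow> 'k \<Rightarrow> 'k quat set" where
  "OD_units absk p dl = {q \<in> OD absk p dl. \<exists>r \<in> OD absk p dl.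
       qmul p dl q r = qone \<and> qmul p dl r q = qone}"

definition pure_quat :: "'k::field quat \<Rightarrow> bool" where
  "pure_quat q \<longleftrightarrow> qconj q = Q (- re q) (- ci q) (- cj q) (- cij q)"

end

theory Submission imports Defs begin

text \<open>Let \<open>L = k(j)\<close>, the unramified quadratic extension, so that \<open>D = L \<oplus> iL\<close> and
  \<open>N(\<alpha> + i\<beta>) = N(\<alpha>) - \<pi> N(\<beta>)\<close>. Norms from \<open>L\<close> have even valuation, hence
  \<open>|\<alpha> + i\<beta>| = max(|\<alpha>|\<^sub>L\<^sup>2, |\<pi>| |\<beta>|\<^sub>L\<^sup>2)\<close>; the minimal quadratic defect of \<open>\<Delta>\<close>
  makes \<open>|\<cdot>|\<^sub>L\<close> explicit in coordinates. For pure \<open>a\<close> and \<open>b = \<eta>a\<bar>\<eta>\<close> one has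
  \<open>T(\<bar>b a) = 2N(\<eta>)N(a) - N(\<eta>a - a\<eta>)\<close>, and \<open>T(2b\<inverse>a) = 2T(\<bar>b a)/N(b)\<close> with \<open>|N(b)| = |\<pi>|\<^sup>2\<close>.
  When \<open>|\<eta>| = |\<pi>|\<close> and \<open>|a| = 1\<close>, every \<open>L\<close>-coordinate of the commutator \<open>\<eta>a - a\<eta>\<close> lies
  in \<open>\<pi>O\<^sub>L\<close>, so \<open>|N(\<eta>a - a\<eta>)| \<le> |\<pi>|\<^sup>2\<close>; with \<open>|2| \<le> |\<pi>|\<close> the trace is bounded by \<open>|\<pi>|\<close>.\<close>

definition qsub :: "'k::field quat \<Rightarrow> 'k quat \<Rightarrow> 'k quat" where
  "qsub x y = Q (re x - re y) (ci x - ci y) (cj x - cj y) (cij x - cij y)"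

lemma qnorm_qmul: "qnorm p dl (qmul p dl x y) = qnorm p dl x * qnorm p dl y"
  by (cases x; cases y) (simp add: qnorm_def qmul_def power2_eq_square algebra_simps)

lemma qnorm_qconj [simp]: "qnorm p dl (qconj x) = qnorm p dl x"
  by (simp add: qnorm_def qconj_def)

lemma qnorm_qone [simp]: "qnorm p dl qone = 1"
  by (simp add: qone_def qnorm_def)

lemma pure_quat_iff: "pure_quat (q :: 'k::field_char_0 quat) \<longleftrightarrow> re q = 0"
  by (cases q) (auto simp: pure_quat_def qconj_def)

lemma qtrace_qscale_qinv:
  "qtrace (qmul p dl (qscale s (qinv p dl x)) y) = s * qtrace (qmul p dl (qconj x) y) / qnorm p dl x"
  by (cases x; cases y)
    (simp add: qtrace_def qmul_def qscale_def qinv_def qconj_def divide_inverse algebra_simps)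

lemma qtrace_conj_sandwich_pure:
  assumes "pure_quat a"
  shows "qtrace (qmul p dl (qconj (qmul p dl (qmul p dl e a) (qconj e))) a)
     = 2 * qnorm p dl e * qnorm p dl a - qnorm p dl (qsub (qmul p dl e a) (qmul p dl a e))"
  using assms
  by (cases e; cases a)
    (simp add: pure_quat_def qtrace_def qsub_def qnorm_def qmul_def qconj_def
      power2_eq_square algebra_simps)

lemma qsub_commutator_pure:
  "qsub (qmul p dl (Q e0 e1 e2 e3) (Q 0 b c d)) (qmul p dl (Q 0 b c d) (Q e0 e1 e2 e3))
   = Q 0 (2 * dl * (e3 * c - e2 * d)) (2 * p * (e1 * d - e3 * b)) (2 * (e1 * c - e2 * b))"
  by (simp add: qsub_def qmul_def algebra_simps)

locale dyadic_field =
  fixes absk :: "'k::field_char_0 \<Rightarrow> real" and p :: 'k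
  assumes dyadic: "dyadic_local_field absk" and uniformizer: "uniformizer absk p"
begin

lemma abs_nonneg [simp]: "absk x \<ge> 0"
  using dyadic unfolding dyadic_local_field_def by blast

lemma abs_eq_0_iff [simp]: "absk x = 0 \<longleftrightarrow> x = 0"
  using dyadic unfolding dyadic_local_field_def by blast

lemma abs_mult [simp]: "absk (x * y) = absk x * absk y"
  using dyadic unfolding dyadic_local_field_def by blast

lemma abs_add_le_max: "absk (x + y) \<le> max (absk x) (absk y)"
  using dyadic unfolding dyadic_local_field_def by blast

lemma abs_two_less_one: "absk 2 < 1"
  using dyadic unfolding dyadic_local_field_def by blast

lemma abs_p_pos: "0 < absk p"
  and abs_p_less_one: "absk p < 1"
  and abs_less_one_imp_le_p: "absk x < 1 \<Longrightarrow> absk x \<le> absk p"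
  using uniformizer unfolding uniformizer_def by blast+

lemma abs_zero [simp]: "absk 0 = 0"
  by simp

lemma abs_one [simp]: "absk 1 = 1"
  using abs_mult[of 1 1] by (metis abs_eq_0_iff mult_cancel_left2 one_neq_zero)

lemma abs_minus [simp]: "absk (- x) = absk x"
proof -
  have "absk (-1) * absk (-1) = 1"
    using abs_mult[of "-1" "-1"] by simp
  then have "absk (-1) = 1"
    using abs_nonneg[of "-1"] by (metis abs_of_nonneg real_sqrt_abs2 real_sqrt_mult_self real_sqrt_one)
  then show ?thesis
    using abs_mult[of "-1" x] by simp
qed

lemma abs_power2 [simp]: "absk (x ^ 2) = absk x ^ 2"
  by (simp add: power2_eq_square)

lemma abs_inverse [simp]: "absk (inverse x) = inverse (absk x)"
proof (cases "x = 0")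
  case False
  then have "absk x * absk (inverse x) = 1"
    using abs_mult[of x "inverse x"] by (simp del: abs_mult)
  then show ?thesis by (metis inverse_unique)
qed simp

lemma abs_divide [simp]: "absk (x / y) = absk x / absk y"
  by (simp add: divide_inverse)

lemma abs_add_le: "absk x \<le> C \<Longrightarrow> absk y \<le> C \<Longrightarrow> absk (x + y) \<le> C"
  using abs_add_le_max[of x y] by simp

lemma abs_diff_le: "absk x \<le> C \<Longrightarrow> absk y \<le> C \<Longrightarrow> absk (x - y) \<le> C"
  using abs_add_le[of x C "- y"] by simp

lemma abs_two_le_p: "absk 2 \<le> absk p"
  using abs_less_one_imp_le_p abs_two_less_one by blast

lemma abs_add_eq_left: assumes "absk y < absk x" shows "absk (x + y) = absk x"
proof -
  have "absk (x + y) \<le> absk x"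
    using abs_add_le_max[of x y] assms by simp
  moreover have "absk x \<le> max (absk (x + y)) (absk y)"
    using abs_add_le_max[of "x + y" "- y"] by simp
  ultimately show ?thesis using assms by linarith
qed

lemma abs_add_eq_max: assumes "absk x \<noteq> absk y" shows "absk (x + y) = max (absk x) (absk y)"
  using assms abs_add_eq_left[of y x] abs_add_eq_left[of x y]
  by (cases "absk y < absk x") (auto simp: add.commute max_def)

lemma abs_four_pos: "0 < absk 4"
  using abs_nonneg[of 4] by (simp add: less_le)

lemma abs_four_le_two: "absk 4 \<le> absk 2"
  using abs_mult[of 2 2] abs_two_less_one abs_nonneg[of 2] by (simp add: mult_left_le_one_le)

lemma abs_four_less_one: "absk 4 < 1"
  using abs_four_le_two abs_two_less_one by linarith

lemma abs_le_one_if_p_mult_square_le_one: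
  assumes "absk p * absk u ^ 2 \<le> 1" shows "absk u \<le> 1"
proof (rule ccontr)
  assume "\<not> absk u \<le> 1"
  then have u: "1 < absk u" by simp
  then have "absk (inverse u) < 1" by (simp add: inverse_less_1_iff)
  then have "inverse (absk u) \<le> absk p"
    using abs_less_one_imp_le_p by fastforce
  then have "1 \<le> absk p * absk u"
    using u by (simp add: field_simps)
  then have "absk u \<le> absk p * absk u ^ 2"
    using u by (simp add: power2_eq_square mult_le_cancel_right1 mult.assoc)
  with assms u show False by simp
qed

text \<open>The value group is generated by \<open>|\<pi>|\<close>, so \<open>|\<pi>|\<close> is not a square of a value.\<close>
lemma square_eq_p_mult_square_imp_zero:
  assumes "absk u ^ 2 = absk p * absk v ^ 2" shows "v = 0"
proof (rule ccontr)
  assume "v \<noteq> 0"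
  define w where "w = u / v"
  have w: "absk w ^ 2 = absk p"
    unfolding w_def using assms \<open>v \<noteq> 0\<close> by (simp add: power_divide)
  then have "absk w < 1"
    using abs_p_less_one power_less_one_iff[OF abs_nonneg, of w 2] by simp
  then have "absk w ^ 2 \<le> absk p ^ 2"
    using abs_less_one_imp_le_p abs_nonneg[of w] by (simp add: power_mono)
  then show False
    using w abs_p_pos abs_p_less_one by (simp add: power2_eq_square)
qed

lemma abs_eq_1_if_mult_eq_1:
  assumes "absk x \<le> 1" and "absk y \<le> 1" and "x * y = 1" shows "absk x = 1"
proof -
  have "absk x * absk y = 1"
    using assms(3) abs_mult[of x y] by simp
  then show ?thesis
    using assms(1,2) abs_nonneg[of x] mult_left_le[of "absk y" "absk x"] by linarith
qed

lemma abs_qnorm_OD_unit: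
  assumes "q \<in> OD_units absk p dl" shows "absk (qnorm p dl q) = 1"
proof -
  obtain r where "absk (qnorm p dl q) \<le> 1" "absk (qnorm p dl r) \<le> 1" "qmul p dl q r = qone"
    using assms unfolding OD_units_def OD_def qabs_def by auto
  then show ?thesis
    using abs_eq_1_if_mult_eq_1 qnorm_qmul[of p dl q r] by simp
qed

lemma abs_le_p_imp_mem_prime_ideal:
  assumes "absk t \<le> absk p" shows "t \<in> {p * y | y. y \<in> Ok absk}"
proof -
  have "p \<noteq> 0" using abs_p_pos by auto
  then have "t = p * (t / p)" by simp
  moreover have "t / p \<in> Ok absk"
    unfolding Ok_def using assms abs_p_pos by (simp add: field_simps)
  ultimately show ?thesis by blast
qed

text \<open>The bound \<open>|\<Delta> - x\<^sup>2| \<ge> |4|\<close> is the inclusion \<open>4 \<in> \<dd>(\<Delta>)\<close>, and \<open>4/\<pi> \<notin> \<dd>(\<Delta>)\<close>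
  yields an \<open>x\<^sub>0\<close> attaining it.\<close>
lemma unit_min_quad_defectD:
  assumes "unit_min_quad_defect absk dl"
  shows "absk dl = 1" and "\<And>x. absk 4 \<le> absk (dl - x ^ 2)"
    and "\<exists>x0. absk (x0 ^ 2 - dl) \<le> absk 4"
proof -
  have unit: "dl \<in> Ok_units absk" and defect: "quad_defect absk dl = {4 * y | y. y \<in> Ok absk}"
    using assms unfolding unit_min_quad_defect_def by auto
  from unit show "absk dl = 1"
    unfolding Ok_units_def Ok_def using abs_eq_1_if_mult_eq_1 by blast
  have "4 \<in> quad_defect absk dl"
    unfolding defect Ok_def by force
  then have four_in: "\<exists>y. 4 = (dl - x ^ 2) * y \<and> absk y \<le> 1" for x
    unfolding quad_defect_def Ok_def by blast
  show lower: "absk 4 \<le> absk (dl - x ^ 2)" for x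
  proof -
    obtain y where y: "4 = (dl - x ^ 2) * y" "absk y \<le> 1"
      using four_in by blast
    then have "absk 4 = absk (dl - x ^ 2) * absk y"
      by (metis abs_mult)
    also have "\<dots> \<le> absk (dl - x ^ 2)"
      using y(2) by (simp add: mult_left_le)
    finally show ?thesis .
  qed
  have "4 / p \<notin> {4 * y | y. y \<in> Ok absk}"
  proof
    assume "4 / p \<in> {4 * y | y. y \<in> Ok absk}"
    then obtain y where y: "4 / p = 4 * y" "absk y \<le> 1" unfolding Ok_def by auto
    moreover have "p \<noteq> 0" using abs_p_pos by auto
    ultimately have "y = 1 / p" by (simp add: field_simps)
    with y(2) have "1 / absk p \<le> 1" by simp
    then show False using abs_p_pos abs_p_less_one by (simp add: field_simps)
  qed
  then obtain x where x: "4 / p \<notin> {(dl - x ^ 2) * y | y. y \<in> Ok absk}"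
    unfolding defect[symmetric] quad_defect_def by blast
  define z where "z = dl - x ^ 2"
  have z: "0 < absk z"
    using lower[of x] abs_four_pos unfolding z_def by linarith
  have "absk z < absk 4 / absk p"
  proof (rule ccontr)
    assume "\<not> absk z < absk 4 / absk p"
    then have "absk (4 / p / z) \<le> 1"
      using abs_p_pos z by (simp add: field_simps)
    moreover have "z \<noteq> 0" using z by auto
    then have "4 / p = z * (4 / p / z)" by simp
    ultimately show False using x unfolding z_def Ok_def by blast
  qed
  then have "absk (z * p / 4) \<le> absk p"
    using abs_p_pos abs_four_pos by (intro abs_less_one_imp_le_p) (simp add: field_simps)
  then have "absk z \<le> absk 4"
    using abs_p_pos abs_four_pos by (simp add: field_simps)
  then have "absk (x ^ 2 - dl) \<le> absk 4"
    unfolding z_def by (metis abs_minus minus_diff_eq)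
  then show "\<exists>x0. absk (x0 ^ 2 - dl) \<le> absk 4" by blast
qed

end

locale unramified_norm = dyadic_field +
  fixes dl x0 :: "'k::field_char_0"
  assumes abs_dl: "absk dl = 1"
    and defect_lower: "\<And>x. absk 4 \<le> absk (dl - x ^ 2)"
    and defect_approx: "absk (x0 ^ 2 - dl) \<le> absk 4"
begin

text \<open>\<open>lnorm a c\<close> is the absolute value of \<open>a + cj\<close> in the unramified extension \<open>k(j)\<close>
  (\<open>j\<^sup>2 = \<Delta>\<close>): its ring of integers is \<open>O\<^sub>k[(x\<^sub>0 + j)/2]\<close>, whence the two coordinates.\<close>
definition lnorm :: "'k \<Rightarrow> 'k \<Rightarrow> real" where
  "lnorm a c = max (absk (a - c * x0)) (absk (2 * c))"

lemma abs_x0 [simp]: "absk x0 = 1"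
proof -
  have "absk (x0 ^ 2 - dl) < absk dl"
    using defect_approx abs_four_less_one abs_dl by simp
  then have "absk (dl + (x0 ^ 2 - dl)) = absk dl" by (rule abs_add_eq_left)
  then show ?thesis
    using abs_dl abs_nonneg[of x0] by (simp add: power2_eq_1_iff)
qed

lemma lnorm_nonneg: "0 \<le> lnorm a c"
  by (simp add: lnorm_def le_max_iff_disj)

lemma lnorm_value: obtains u where "lnorm a c = absk u"
proof (cases "absk (a - c * x0) \<le> absk (2 * c)")
  case True
  then show ?thesis using that[of "2 * c"] by (simp add: lnorm_def)
next
  case False
  then show ?thesis using that[of "a - c * x0"] by (simp add: lnorm_def)
qed

text \<open>With \<open>r = a - cx\<^sub>0\<close>, \<open>s = 2c\<close>, \<open>m = (x\<^sub>0\<^sup>2 - \<Delta>)/4\<close> one has \<open>a\<^sup>2 - \<Delta>c\<^sup>2 = r\<^sup>2 + x\<^sub>0rs + ms\<^sup>2\<close>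
  with \<open>|m| \<le> 1\<close>; if \<open>|s| \<ge> |r|\<close> the quadratic factor is \<open>-(\<Delta> - (2r/s + x\<^sub>0)\<^sup>2)/4\<close>, a unit
  by the defect bound.\<close>
lemma abs_norm_eq_lnorm_sq: "absk (a ^ 2 - dl * c ^ 2) = lnorm a c ^ 2"
proof -
  define r s m where "r = a - c * x0" and "s = 2 * c" and "m = (x0 ^ 2 - dl) / 4"
  define M where "M = max (absk r) (absk s)"
  have decomp: "a ^ 2 - dl * c ^ 2 = r ^ 2 + (x0 * r * s + m * s ^ 2)"
    unfolding r_def s_def m_def by (simp add: field_simps power2_eq_square)
  have m: "absk m \<le> 1"
    unfolding r_def s_def m_def using defect_approx abs_four_pos by simp
  have r: "absk r \<le> M" and s: "absk s \<le> M"
    unfolding M_def by auto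
  have "absk (r ^ 2) \<le> M ^ 2" and "absk (x0 * r * s) \<le> M ^ 2" and "absk (s ^ 2) \<le> M ^ 2"
    using r s by (simp_all add: power2_eq_square mult_mono')
  moreover have "absk (m * s ^ 2) \<le> absk (s ^ 2)"
    using m by (simp add: mult_left_le_one_le)
  ultimately have "absk (a ^ 2 - dl * c ^ 2) \<le> M ^ 2"
    unfolding decomp by (intro abs_add_le) simp_all
  moreover have "M ^ 2 \<le> absk (a ^ 2 - dl * c ^ 2)"
  proof (cases "absk s < absk r")
    case True
    have "absk (x0 * r * s) < absk r ^ 2"
      using True by (simp add: power2_eq_square mult_strict_left_mono order_le_less_trans[OF abs_nonneg True])
    moreover have "absk (m * s ^ 2) < absk r ^ 2"
      using True m abs_nonneg[of s]
      by (simp add: order_le_less_trans[OF mult_left_le_one_le power_strict_mono])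
    ultimately have "absk (x0 * r * s + m * s ^ 2) < absk (r ^ 2)"
      using abs_add_le_max[of "x0 * r * s" "m * s ^ 2"] by simp
    then show ?thesis
      unfolding decomp M_def using True abs_add_eq_left by simp
  next
    case False
    show ?thesis
    proof (cases "s = 0")
      case s0: False
      define t where "t = r / s"
      have "- (4 * (t ^ 2 + x0 * t + m)) = dl - (2 * t + x0) ^ 2"
        unfolding r_def s_def m_def by (simp add: field_simps power2_eq_square)
      then have "absk 4 \<le> absk 4 * absk (t ^ 2 + x0 * t + m)"
        using defect_lower by (metis abs_minus abs_mult)
      then have "1 \<le> absk (t ^ 2 + x0 * t + m)"
        using abs_four_pos by simp
      moreover have "r ^ 2 + (x0 * r * s + m * s ^ 2) = s ^ 2 * (t ^ 2 + x0 * t + m)"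
        unfolding t_def using s0 by (simp add: field_simps power2_eq_square)
      ultimately show ?thesis
        unfolding decomp M_def using False by (simp add: mult_le_cancel_left1)
    qed (use False in \<open>simp add: M_def r_def s_def\<close>)
  qed
  ultimately show ?thesis
    unfolding M_def r_def s_def m_def lnorm_def by simp
qed

lemma lnorm_mult:
  "lnorm (a * a' + dl * c * c') (a * c' + c * a') = lnorm a c * lnorm a' c'"
proof -
  have "(a * a' + dl * c * c') ^ 2 - dl * (a * c' + c * a') ^ 2
      = (a ^ 2 - dl * c ^ 2) * (a' ^ 2 - dl * c' ^ 2)"
    by (simp add: power2_eq_square algebra_simps)
  then have "lnorm (a * a' + dl * c * c') (a * c' + c * a') ^ 2 = (lnorm a c * lnorm a' c') ^ 2"
    by (simp only: abs_norm_eq_lnorm_sq [symmetric] abs_mult power_mult_distrib)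
  then show ?thesis
    using lnorm_nonneg by (simp add: mult_nonneg_nonneg power2_eq_iff_nonneg)
qed

lemma lnorm_add_le: "lnorm (a + a') (c + c') \<le> max (lnorm a c) (lnorm a' c')"
proof -
  have "a + a' - (c + c') * x0 = (a - c * x0) + (a' - c' * x0)" and "2 * (c + c') = 2 * c + 2 * c'"
    by (simp_all add: algebra_simps)
  moreover have "absk ((a - c * x0) + (a' - c' * x0)) \<le> max (lnorm a c) (lnorm a' c')"
    and "absk (2 * c + 2 * c') \<le> max (lnorm a c) (lnorm a' c')"
    by (rule order_trans[OF abs_add_le_max max.mono]; simp add: lnorm_def)+
  ultimately show ?thesis
    unfolding lnorm_def by (simp only: max.bounded_iff)
qed

lemma lnorm_smult: "lnorm (s * a) (s * c) = absk s * lnorm a c"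
proof -
  have "s * a - s * c * x0 = s * (a - c * x0)" and "2 * (s * c) = s * (2 * c)"
    by (simp_all add: algebra_simps)
  then show ?thesis
    unfolding lnorm_def by (simp only: abs_mult max_mult_distrib_left) simp
qed

text \<open>\<open>a - cx\<^sub>0\<close> and \<open>a + cx\<^sub>0\<close> differ by \<open>2cx\<^sub>0\<close>, which is already dominated.\<close>
lemma lnorm_conj: "lnorm a (- c) = lnorm a c"
proof -
  have le: "lnorm a (- d) \<le> lnorm a d" for d
  proof -
    have "a - - d * x0 = (a - d * x0) + 2 * d * x0"
      by (simp add: algebra_simps)
    moreover have "absk (a - d * x0) \<le> lnorm a d" and "absk (2 * d * x0) \<le> lnorm a d"
      by (simp_all add: lnorm_def)
    ultimately have "absk (a - - d * x0) \<le> lnorm a d"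
      by (simp only: abs_add_le)
    moreover have "absk (2 * - d) \<le> lnorm a d"
      by (simp add: lnorm_def)
    ultimately show ?thesis
      unfolding lnorm_def[of a "- d"] by (rule max.boundedI)
  qed
  show ?thesis
    using le[of c] le[of "- c"] by simp
qed

lemma lnorm_imag_le: "lnorm 0 (2 * c) \<le> lnorm a c"
  using abs_four_le_two abs_nonneg[of c]
  by (simp add: lnorm_def mult_right_mono)

lemma lnorm_less_one_imp_le_p: "lnorm a c < 1 \<Longrightarrow> lnorm a c \<le> absk p"
  by (rule lnorm_value[of a c]) (simp add: abs_less_one_imp_le_p)

lemma lnorm_le_one_if_p_mult_square_le_one: "absk p * lnorm a c ^ 2 \<le> 1 \<Longrightarrow> lnorm a c \<le> 1"
  by (rule lnorm_value[of a c]) (simp add: abs_le_one_if_p_mult_square_le_one)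

text \<open>\<open>N(\<alpha> + i\<beta>) = N(\<alpha>) - \<pi>N(\<beta>)\<close>, and the two summands never have equal absolute value.\<close>
lemma abs_qnorm:
  "absk (qnorm p dl (Q a b c d)) = max (lnorm a c ^ 2) (absk p * lnorm b d ^ 2)"
proof -
  have qn: "qnorm p dl (Q a b c d) = (a ^ 2 - dl * c ^ 2) + - (p * (b ^ 2 - dl * d ^ 2))"
    by (simp add: qnorm_def algebra_simps)
  have alpha: "absk (a ^ 2 - dl * c ^ 2) = lnorm a c ^ 2"
    and beta: "absk (- (p * (b ^ 2 - dl * d ^ 2))) = absk p * lnorm b d ^ 2"
    by (simp_all add: abs_norm_eq_lnorm_sq)
  show ?thesis
  proof (cases "lnorm a c ^ 2 = absk p * lnorm b d ^ 2")
    case False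
    have "absk (qnorm p dl (Q a b c d))
        = max (absk (a ^ 2 - dl * c ^ 2)) (absk (- (p * (b ^ 2 - dl * d ^ 2))))"
      unfolding qn by (rule abs_add_eq_max) (simp only: alpha beta False not_False_eq_True)
    then show ?thesis by (simp only: alpha beta)
  next
    case True
    obtain u v where u: "lnorm a c = absk u" and v: "lnorm b d = absk v"
      by (meson lnorm_value)
    have "absk u ^ 2 = absk p * absk v ^ 2"
      using True u v by simp
    then have beta0: "lnorm b d = 0"
      using v square_eq_p_mult_square_imp_zero by simp
    with True have alpha0: "lnorm a c = 0" by simp
    have "max (lnorm a c ^ 2) (absk p * lnorm b d ^ 2) = 0"
      using alpha0 beta0 by simp
    moreover have "absk (qnorm p dl (Q a b c d)) \<le> max (lnorm a c ^ 2) (absk p * lnorm b d ^ 2)"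
      using abs_add_le_max[of "a ^ 2 - dl * c ^ 2" "- (p * (b ^ 2 - dl * d ^ 2))"]
      unfolding qn [symmetric] alpha beta .
    ultimately show ?thesis
      using abs_nonneg[of "qnorm p dl (Q a b c d)"] by linarith
  qed
qed

lemma lnorm_coords_if_abs_qnorm_eq_p:
  assumes "absk (qnorm p dl (Q a b c d)) = absk p"
  shows "lnorm a c \<le> absk p" and "lnorm b d \<le> 1"
proof -
  have "lnorm a c ^ 2 < 1" and "absk p * lnorm b d ^ 2 \<le> absk p * 1"
    using assms abs_p_less_one unfolding abs_qnorm by auto
  then show "lnorm a c \<le> absk p" and "lnorm b d \<le> 1"
    using lnorm_nonneg abs_p_pos
    by (auto intro: lnorm_less_one_imp_le_p simp: power_less_one_iff power_le_one_iff)
qed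

lemma lnorm_coords_if_abs_qnorm_eq_1:
  assumes "absk (qnorm p dl (Q a b c d)) = 1"
  shows "lnorm a c \<le> 1" and "lnorm b d \<le> 1"
proof -
  have "lnorm a c ^ 2 \<le> 1" and "absk p * lnorm b d ^ 2 \<le> 1"
    using assms unfolding abs_qnorm by auto
  then show "lnorm a c \<le> 1" and "lnorm b d \<le> 1"
    using lnorm_nonneg by (auto intro: lnorm_le_one_if_p_mult_square_le_one simp: power_le_one_iff)
qed

lemma abs_qnorm_le_p_squared:
  assumes "lnorm a c \<le> absk p" and "lnorm b d \<le> absk p"
  shows "absk (qnorm p dl (Q a b c d)) \<le> absk p ^ 2"
proof -
  have "lnorm a c ^ 2 \<le> absk p ^ 2"
    using assms(1) lnorm_nonneg by (rule power_mono)
  moreover have "absk p * lnorm b d ^ 2 \<le> absk p * absk p ^ 2"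
    using assms(2) lnorm_nonneg abs_p_pos by (simp add: power_mono)
  moreover have "absk p * absk p ^ 2 \<le> absk p ^ 2"
    using abs_p_less_one by (simp add: mult_left_le_one_le)
  ultimately show ?thesis
    unfolding abs_qnorm by simp
qed

text \<open>In \<open>L\<close>-coordinates, with \<open>\<eta> = \<epsilon>\<^sub>0 + i\<epsilon>\<^sub>1\<close> and \<open>a = \<alpha> + i\<beta>\<close>, \<open>\<alpha>\<close> pure:
  \<open>\<eta>a - a\<eta> = \<pi>(\<bar>\<epsilon>\<^sub>1\<beta> - \<epsilon>\<^sub>1\<bar>\<beta>) + i((\<bar>\<epsilon>\<^sub>0 - \<epsilon>\<^sub>0)\<beta> + 2\<epsilon>\<^sub>1\<alpha>)\<close>.\<close>
lemma abs_qnorm_commutator_le: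
  assumes eps0: "lnorm e0 e2 \<le> absk p" and eps1: "lnorm e1 e3 \<le> 1"
    and alpha: "lnorm 0 c \<le> 1" and beta: "lnorm b d \<le> 1"
  shows "absk (qnorm p dl (Q 0 (2 * dl * (e3 * c - e2 * d)) (2 * p * (e1 * d - e3 * b))
                              (2 * (e1 * c - e2 * b)))) \<le> absk p ^ 2"
proof -
  have cross: "lnorm (e1 * b + dl * - e3 * d) (e1 * d + - e3 * b) \<le> 1"
    using eps1 beta lnorm_nonneg by (simp only: lnorm_mult lnorm_conj) (simp add: mult_le_one)
  have "p * (2 * (e1 * d + - e3 * b)) = 2 * p * (e1 * d - e3 * b)"
    by (simp add: algebra_simps)
  moreover have "lnorm (p * 0) (p * (2 * (e1 * d + - e3 * b))) \<le> absk p"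
    using order_trans[OF lnorm_imag_le cross] abs_p_pos
    by (simp only: lnorm_smult) (simp add: mult_left_le)
  ultimately have L_part: "lnorm 0 (2 * p * (e1 * d - e3 * b)) \<le> absk p"
    by (simp only: mult_zero_right)
  have "lnorm 0 (2 * - e2) \<le> absk p"
    using lnorm_imag_le[of "- e2" e0] lnorm_conj[of e0 e2] eps0 by linarith
  then have "lnorm 0 (2 * - e2) * lnorm b d \<le> absk p * 1"
    using beta lnorm_nonneg abs_p_pos by (intro mult_mono) simp_all
  then have "lnorm (0 * b + dl * (2 * - e2) * d) (0 * d + (2 * - e2) * b) \<le> absk p"
    by (simp only: lnorm_mult mult_1_right)
  moreover have "absk 2 * (lnorm e1 e3 * lnorm 0 c) \<le> absk p * (1 * 1)"
    using abs_two_le_p eps1 alpha lnorm_nonneg by (intro mult_mono) simp_all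
  then have "lnorm (2 * (e1 * 0 + dl * e3 * c)) (2 * (e1 * c + e3 * 0)) \<le> absk p"
    by (simp only: lnorm_smult lnorm_mult mult_1_right)
  ultimately have "lnorm (0 * b + dl * (2 * - e2) * d + 2 * (e1 * 0 + dl * e3 * c))
      (0 * d + (2 * - e2) * b + 2 * (e1 * c + e3 * 0)) \<le> absk p"
    by (rule order_trans[OF lnorm_add_le max.boundedI])
  moreover have "0 * b + dl * (2 * - e2) * d + 2 * (e1 * 0 + dl * e3 * c) = 2 * dl * (e3 * c - e2 * d)"
    and "0 * d + (2 * - e2) * b + 2 * (e1 * c + e3 * 0) = 2 * (e1 * c - e2 * b)"
    by (simp_all add: algebra_simps)
  ultimately have i_part: "lnorm (2 * dl * (e3 * c - e2 * d)) (2 * (e1 * c - e2 * b)) \<le> absk p"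
    by (simp only:)
  show ?thesis
    using L_part i_part by (rule abs_qnorm_le_p_squared)
qed

lemma abs_qtrace_conj_sandwich_le:
  assumes eta: "absk (qnorm p dl eta) = absk p" and a: "absk (qnorm p dl a) = 1"
    and pure: "pure_quat a"
  shows "absk (2 * qtrace (qmul p dl (qconj (qmul p dl (qmul p dl eta a) (qconj eta))) a))
    \<le> absk p ^ 3"
proof -
  obtain e0 e1 e2 e3 where e: "eta = Q e0 e1 e2 e3" by (cases eta)
  obtain b c d where a_eq: "a = Q 0 b c d"
    using pure by (cases a) (simp add: pure_quat_iff)
  have "absk (qnorm p dl (qsub (qmul p dl eta a) (qmul p dl a eta))) \<le> absk p ^ 2"
    using lnorm_coords_if_abs_qnorm_eq_p[OF eta[unfolded e]]
      lnorm_coords_if_abs_qnorm_eq_1[OF a[unfolded a_eq]]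
    unfolding e a_eq qsub_commutator_pure by (rule abs_qnorm_commutator_le)
  then have "absk (2 * qnorm p dl (qsub (qmul p dl eta a) (qmul p dl a eta))) \<le> absk p * absk p ^ 2"
    using abs_two_le_p by (simp add: mult_mono)
  also have "\<dots> = absk p ^ 3"
    by (simp add: power3_eq_cube power2_eq_square)
  finally have commutator: "absk (2 * qnorm p dl (qsub (qmul p dl eta a) (qmul p dl a eta))) \<le> absk p ^ 3" .
  have "absk (4 * qnorm p dl eta * qnorm p dl a) \<le> absk p * absk p * absk p"
    using eta a abs_two_le_p abs_mult[of 2 2] by (simp add: mult_mono)
  then have norms: "absk (4 * qnorm p dl eta * qnorm p dl a) \<le> absk p ^ 3"
    by (simp add: power3_eq_cube)
  have "2 * qtrace (qmul p dl (qconj (qmul p dl (qmul p dl eta a) (qconj eta))) a)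
      = 4 * qnorm p dl eta * qnorm p dl a - 2 * qnorm p dl (qsub (qmul p dl eta a) (qmul p dl a eta))"
    unfolding qtrace_conj_sandwich_pure[OF pure] by (simp add: algebra_simps)
  then show ?thesis
    using abs_diff_le[OF norms commutator] by simp
qed

end

theorem lemma5p7:
  fixes absk :: "'k::field_char_0 \<Rightarrow> real" and p dl :: 'k and eta a1 :: "'k quat"
  assumes "dyadic_local_field absk"
    and "uniformizer absk p"
    and "unit_min_quad_defect absk dl"
    and "qabs absk p dl eta = qabs absk p dl qi"
    and "a1 \<in> OD_units absk p dl"
    and "pure_quat a1"
  shows "qtrace (qmul p dl
            (qscale 2 (qinv p dl (qmul p dl (qmul p dl eta a1) (qconj eta)))) a1)
         \<in> {p * y | y. y \<in> Ok absk}"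
proof -
  interpret dyadic_field absk p
    using assms(1,2) by unfold_locales
  obtain x0 where "absk (x0 ^ 2 - dl) \<le> absk 4"
    using unit_min_quad_defectD(3)[OF assms(3)] by blast
  then interpret unramified_norm absk p dl x0
    using unit_min_quad_defectD(1,2)[OF assms(3)] by unfold_locales auto
  define B where "B = qmul p dl (qmul p dl eta a1) (qconj eta)"
  have eta: "absk (qnorm p dl eta) = absk p"
    using assms(4) by (simp add: qabs_def qi_def qnorm_def)
  have a1: "absk (qnorm p dl a1) = 1"
    using assms(5) by (rule abs_qnorm_OD_unit)
  have "absk (qnorm p dl B) = absk p ^ 2"
    unfolding B_def using eta a1 by (simp add: qnorm_qmul power2_eq_square)
  moreover have "absk (2 * qtrace (qmul p dl (qconj B) a1)) \<le> absk p ^ 3"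
    unfolding B_def using eta a1 assms(6) by (rule abs_qtrace_conj_sandwich_le)
  ultimately have "absk (qtrace (qmul p dl (qscale 2 (qinv p dl B)) a1)) \<le> absk p"
    using abs_p_pos by (simp add: qtrace_qscale_qinv divide_le_eq power2_eq_square power3_eq_cube)
  then show ?thesis
    unfolding B_def by (rule abs_le_p_imp_mem_prime_ideal)
qed

end
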